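(* Let $M$ be a real symmetric $n\times n$ matrix with eigenvalues $\lambda_1\le\lambda_2\le\cdots\le\lambda_n$ (listed with multiplicity), and let $\Gamma=(G,\sigma)$, $G=(V,E)$, be its induced signed graph. Fix $k\in\{1,\dots,n\}$ and let $f_k$ be an eigenfunction with $Mf_k=\lambda_kf_k$. Then $$\mathfrak{S}(f_k)\le k+r-1\quad\text{and}\quad \mathfrak{W}(f_k)\le k+c-1,$$ where $r$ is the multiplicity of $\lambda_k$ and $c$ is the number of connected components of $G$. In particular, if $G$ is connected then $\mathfrak{W}(f_k)\le k$. If moreover $f_k$ has minimal support, then $\mathfrak{S}(f_k)\le k$.
   Context: All graphs are finite, simple and undirected. A signed graph $\Gamma=(G,\sigma)$ is a graph $G=(V,E)$ with a signature $\sigma:E\to\{+1,-1\}$; write $\sigma_{xy}=\sigma(\{x,y\})$ and $x\sim y$ if $\{x,y\}\in E$. The induced signed graph of a real symmetric $n\times n$ matrix $M=(M_{ij})$ has vertex set $V=\{x_1,\dots,x_n\}$, edge $\{x_i,x_j\}$ iff $i\ne j$ and $M_{ij}\neq0$, and sign $\sigma_{x_ix_j}=-M_{ij}/|M_{ij}|$. Functions $V\to\mathbb R$ are identified with vectors in $\mathbb R^n$; an eigenfunction is a nonzero eigenvector. An eigenfunction $f$ has minimal support if every eigenfunction $g$ for the same eigenvalue with $\mathrm{supp}(g)\subseteq\mathrm{supp}(f)$ satisfies $\mathrm{supp}(g)=\mathrm{supp}(f)$, where $\mathrm{supp}(f)=\{x: f(x)\ne0\}$. A walk is a sequence of vertices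 $y_1,\dots,y_m$ ($m\ge2$) with $y_j\sim y_{j+1}$ for all $j$. For $f:V\to\mathbb R$ let $\Omega=\{x\in V: f(x)\ne0\}$. An S-walk of $f$ is a walk with $f(y_j)\sigma_{y_jy_{j+1}}f(y_{j+1})>0$ for all $j$. A W-walk of $f$ is a walk such that for any two consecutive nonzeros $y_i,y_j$ ($i<j$, $f(y_i)\ne0\ne f(y_j)$, $f(y_l)=0$ for $i<l<j$) one has $f(y_i)\sigma_{y_iy_{i+1}}\cdots\sigma_{y_{j-1}y_j}f(y_j)>0$ (so every walk containing at most one nonzero of $f$ is a W-walk). On $\Omega$ define $x R_S y$ (resp. $x R_W y$) iff $x=y$ or some S-walk (resp. W-walk) of $f$ connects $x$ and $y$; these are equivalence relations. The strong nodal domains of $f$ are the induced subgraphs of $G$ on the $R_S$-classes, and $\mathfrak{S}(f)$ is their number. If $W_1,\dots,W_q$ are the $R_W$-classes, the weak nodal domains of $f$ are the induced subgraphs on $W_i^0=W_i\cup\{x\in V:\text{there is a W-walk of } f \text{ from } x \text{ to some vertex of } W_i\}$, and $\mathfrak{W}(f)=q$. *)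

theory Defs
  imports "HOL-Analysis.Analysis"
begin

definition adj :: "real^'n^'n \<Rightarrow> 'n \<Rightarrow> 'n \<Rightarrow> bool" where
  "adj M x y \<longleftrightarrow> x \<noteq> y \<and> M $ x $ y \<noteq> 0"

definition sgn_edge :: "real^'n^'n \<Rightarrow> 'n \<Rightarrow> 'n \<Rightarrow> real" where
  "sgn_edge M x y = - (M $ x $ y / \<bar>M $ x $ y\<bar>)"

definition is_walk :: "real^'n^'n \<Rightarrow> 'n list \<Rightarrow> bool" where
  "is_walk M ys \<longleftrightarrow> length ys \<ge> 2 \<and>
     (\<forall>j. Suc j < length ys \<longrightarrow> adj M (ys ! j) (ys ! Suc j))"

definition S_walk :: "real^'n^'n \<Rightarrow> real^'n \<Rightarrow> 'n list \<Rightarrow> bool" where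
  "S_walk M f ys \<longleftrightarrow> is_walk M ys \<and>
     (\<forall>j. Suc j < length ys \<longrightarrow>
        f $ (ys ! j) * sgn_edge M (ys ! j) (ys ! Suc j) * f $ (ys ! Suc j) > 0)"

definition W_walk :: "real^'n^'n \<Rightarrow> real^'n \<Rightarrow> 'n list \<Rightarrow> bool" where
  "W_walk M f ys \<longleftrightarrow> is_walk M ys \<and>
     (\<forall>i j. i < j \<and> j < length ys \<and> f $ (ys ! i) \<noteq> 0 \<and> f $ (ys ! j) \<noteq> 0 \<and>
        (\<forall>l. i < l \<and> l < j \<longrightarrow> f $ (ys ! l) = 0) \<longrightarrow>
        f $ (ys ! i) * (\<Prod>l\<in>{i..<j}. sgn_edge M (ys ! l) (ys ! Suc l)) * f $ (ys ! j) > 0)"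

definition nz_set :: "real^'n \<Rightarrow> 'n set" where
  "nz_set f = {x. f $ x \<noteq> 0}"

definition walk_rel :: "('n list \<Rightarrow> bool) \<Rightarrow> real^'n \<Rightarrow> ('n \<times> 'n) set" where
  "walk_rel P f = {(x, y). x \<in> nz_set f \<and> y \<in> nz_set f \<and>
     (x = y \<or> (\<exists>ys. P ys \<and> ((hd ys = x \<and> last ys = y) \<or> (hd ys = y \<and> last ys = x))))}"

definition strong_nodal_count :: "real^'n^'n \<Rightarrow> real^'n \<Rightarrow> nat" where
  "strong_nodal_count M f = card (nz_set f // walk_rel (S_walk M f) f)"

definition weak_nodal_count :: "real^'n^'n \<Rightarrow> real^'n \<Rightarrow> nat" where
  "weak_nodal_count M f = card (nz_set f // walk_rel (W_walk M f) f)"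

definition num_components :: "real^'n^'n \<Rightarrow> nat" where
  "num_components M = card ((UNIV :: 'n set) // {(x, y). (adj M)\<^sup>*\<^sup>* x y})"

definition eigenspace :: "real^'n^'n \<Rightarrow> real \<Rightarrow> (real^'n) set" where
  "eigenspace M \<mu> = {v. M *v v = \<mu> *\<^sub>R v}"

definition supp :: "real^'n \<Rightarrow> 'n set" where
  "supp f = {x. f $ x \<noteq> 0}"

definition minimal_support :: "real^'n^'n \<Rightarrow> real \<Rightarrow> real^'n \<Rightarrow> bool" where
  "minimal_support M \<mu> f \<longleftrightarrow>
     (\<forall>g. g \<noteq> 0 \<and> M *v g = \<mu> *\<^sub>R g \<and> supp g \<subseteq> supp f \<longrightarrow> supp g = supp f)"

end

theory Submission
  imports Defs
begin

text \<open>Let \<open>Q g = g \<bullet> (M g) - \<lambda>\<^sub>k (g \<bullet> g)\<close>. Strong and weak nodal domains are the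
  classes of equivalences on the nonzeros of f containing every edge xy with
  \<open>f x \<sigma>\<^sub>x\<^sub>y f y > 0\<close>. For such an equivalence the functions supported on the nonzeros of f
  whose ratio with f is constant on each class form a space of dimension at least the number
  of classes, and \<open>Q g = - 1/2 \<Sum>x y. f x M\<^sub>x\<^sub>y f y (g x / f x - g y / f y)\<^sup>2\<close> is \<open>\<le> 0\<close> on
  it, because \<open>f x M\<^sub>x\<^sub>y f y > 0\<close> across every edge joining two classes.

  Q is positive definite on the span of the eigenspaces with eigenvalue \<open>> \<lambda>\<^sub>k\<close>, of
  dimension \<open>\<ge> n - k - r + 1\<close>; this gives the strong bound. Q is positive semidefinite on the
  span of the eigenspaces with eigenvalue \<open>\<ge> \<lambda>\<^sub>k\<close>, of dimension \<open>\<ge> n - k + 1\<close>, and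
  vanishes there only on eigenfunctions. A function g in its intersection with the weak space
  is thus an eigenfunction whose ratio with f is constant across edges between nonzeros of f;
  the eigenvalue equations of f and g at the zeros of f carry this constant through zeros, so
  g/f is constant on each connected component and the intersection has dimension \<open>\<le> c\<close>.
  For f of minimal support, a strong count above k would make the intersection with the strong
  space at least two-dimensional, hence contain an eigenfunction vanishing at a nonzero of f.\<close>

section \<open>Eigenspaces of a symmetric matrix\<close>

lemma matrix_vector_component: "(M *v v) $ x = (\<Sum>y\<in>UNIV. M $ x $ y * v $ y)"
  by (simp add: matrix_vector_mult_def)

lemma inner_vec_sum: "(u::real^'n) \<bullet> v = (\<Sum>x\<in>UNIV. u $ x * v $ x)"
  by (simp add: inner_vec_def)

lemma symmetric_entry:
  assumes "transpose M = M"
  shows "M $ y $ x = M $ x $ y"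
proof -
  have "transpose M $ x $ y = M $ y $ x" by (simp add: transpose_def)
  then show ?thesis using assms by simp
qed

lemma matrix_vector_inner_symmetric:
  fixes M :: "real^'n^'n"
  assumes "transpose M = M"
  shows "(M *v x) \<bullet> y = x \<bullet> (M *v y)"
  by (metis assms dot_lmul_matrix vector_transpose_matrix)

lemma subspace_eigenspace: "subspace (eigenspace M \<mu>)"
  unfolding subspace_def eigenspace_def
  by (auto simp: matrix_vector_right_distrib matrix_vector_mult_scaleR scaleR_add_right)

lemma eigenspace_orthogonal:
  fixes M :: "real^'n^'n"
  assumes "transpose M = M" "x \<in> eigenspace M a" "y \<in> eigenspace M b" "a \<noteq> b"
  shows "x \<bullet> y = 0"
proof -
  have "a * (x \<bullet> y) = (M *v x) \<bullet> y" using assms(2) by (simp add: eigenspace_def)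
  also have "\<dots> = x \<bullet> (M *v y)" by (rule matrix_vector_inner_symmetric[OF assms(1)])
  also have "\<dots> = b * (x \<bullet> y)" using assms(3) by (simp add: eigenspace_def)
  finally show ?thesis using assms(4) by simp
qed

definition eigenspan :: "real^'n^'n \<Rightarrow> real set \<Rightarrow> (real^'n) set" where
  "eigenspan M I = span (\<Union>\<mu>\<in>I. eigenspace M \<mu>)"

lemma subspace_eigenspan: "subspace (eigenspan M I)"
  by (simp add: eigenspan_def)

lemma eigenspan_insert:
  "eigenspan M (insert a I) = {x + y | x y. x \<in> eigenspace M a \<and> y \<in> eigenspan M I}"
proof -
  have "eigenspan M (insert a I) = span (eigenspace M a \<union> (\<Union>\<mu>\<in>I. eigenspace M \<mu>))"
    by (simp add: eigenspan_def)
  also have "\<dots> = {x + y | x y. x \<in> span (eigenspace M a) \<and> y \<in> eigenspan M I}"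
    by (simp add: span_Un eigenspan_def)
  finally show ?thesis
    using span_eq_iff[THEN iffD2, OF subspace_eigenspace[of M a]] by simp
qed

lemma eigenspace_orthogonal_eigenspan:
  fixes M :: "real^'n^'n"
  assumes "transpose M = M" "a \<notin> I" "x \<in> eigenspace M a" "y \<in> eigenspan M I"
  shows "x \<bullet> y = 0"
proof -
  have "orthogonal x y"
  proof (rule orthogonal_to_span)
    show "y \<in> span (\<Union>\<mu>\<in>I. eigenspace M \<mu>)" using assms(4) by (simp add: eigenspan_def)
  next
    fix z assume "z \<in> (\<Union>\<mu>\<in>I. eigenspace M \<mu>)"
    then obtain b where "b \<in> I" "z \<in> eigenspace M b" by auto
    then show "orthogonal x z"
      using eigenspace_orthogonal[OF assms(1) assms(3)] assms(2) by (auto simp: orthogonal_def)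
  qed
  then show ?thesis by (simp add: orthogonal_def)
qed

lemma dim_eigenspan:
  fixes M :: "real^'n^'n"
  assumes symm: "transpose M = M" and "finite I"
  shows "dim (eigenspan M I) = (\<Sum>\<mu>\<in>I. dim (eigenspace M \<mu>))"
  using \<open>finite I\<close>
proof (induction I rule: finite_induct)
  case empty
  then show ?case by (simp add: eigenspan_def)
next
  case (insert a I)
  have "eigenspace M a \<inter> eigenspan M I = {0}"
    using eigenspace_orthogonal_eigenspan[OF symm insert(2)]
      subspace_0[OF subspace_eigenspace] subspace_0[OF subspace_eigenspan] by fastforce
  moreover have "dim (eigenspan M (insert a I)) + dim (eigenspace M a \<inter> eigenspan M I)
      = dim (eigenspace M a) + dim (eigenspan M I)"
    unfolding eigenspan_insert by (rule dim_sums_Int[OF subspace_eigenspace subspace_eigenspan])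
  ultimately show ?case using insert by simp
qed

definition quad_form :: "real^'n^'n \<Rightarrow> real \<Rightarrow> real^'n \<Rightarrow> real" where
  "quad_form M l g = g \<bullet> (M *v g) - l * (g \<bullet> g)"

lemma quad_form_eigenspace:
  "x \<in> eigenspace M a \<Longrightarrow> quad_form M l x = (a - l) * (x \<bullet> x)"
  by (simp add: quad_form_def eigenspace_def algebra_simps)

lemma quad_form_add_eigenspan:
  fixes M :: "real^'n^'n"
  assumes symm: "transpose M = M" and "a \<notin> I" "x \<in> eigenspace M a" "y \<in> eigenspan M I"
  shows "quad_form M l (x + y) = quad_form M l x + quad_form M l y"
proof -
  have xy: "x \<bullet> y = 0" by (rule eigenspace_orthogonal_eigenspan[OF assms])
  have Mx: "M *v x = a *\<^sub>R x" using assms(3) by (simp add: eigenspace_def)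
  have "x \<bullet> (M *v y) = 0" "y \<bullet> (M *v x) = 0"
    using matrix_vector_inner_symmetric[OF symm, of x y] Mx xy by (simp_all add: inner_commute)
  then show ?thesis
    using xy by (simp add: quad_form_def inner_commute algebra_simps)
qed

lemma quad_form_pos_eigenspan:
  fixes M :: "real^'n^'n"
  assumes symm: "transpose M = M" and "finite I" and "\<forall>\<mu>\<in>I. l < \<mu>"
    and "g \<in> eigenspan M I" "g \<noteq> 0"
  shows "0 < quad_form M l g"
  using assms(2-)
proof (induction I arbitrary: g rule: finite_induct)
  case empty
  then show ?case by (simp add: eigenspan_def)
next
  case (insert a I)
  obtain x y where g: "g = x + y" "x \<in> eigenspace M a" "y \<in> eigenspan M I"
    using insert.prems(2) eigenspan_insert by blast
  have Qg: "quad_form M l g = (a - l) * (x \<bullet> x) + quad_form M l y"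
    using quad_form_add_eigenspan[OF symm insert(2) g(2,3)] quad_form_eigenspace[OF g(2)] g(1)
    by simp
  have "l < a" using insert.prems(1) by simp
  then have "0 \<le> (a - l) * (x \<bullet> x)" "x \<noteq> 0 \<Longrightarrow> 0 < (a - l) * (x \<bullet> x)" by simp_all
  moreover have "y \<noteq> 0 \<Longrightarrow> 0 < quad_form M l y"
    using insert.IH insert.prems(1) g(3) by simp
  moreover have "quad_form M l 0 = 0" by (simp add: quad_form_def)
  moreover have "x \<noteq> 0 \<or> y \<noteq> 0" using insert.prems(3) g(1) by auto
  ultimately show ?case
    unfolding Qg by (cases "y = 0") (auto intro: add_pos_nonneg add_nonneg_pos)
qed

lemma dim_eigenspan_indices:
  fixes M :: "real^'n^'n"
  assumes symm: "transpose M = M"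
    and mult: "\<And>\<mu>. card {i \<in> {1..CARD('n)}. lam i = \<mu>} = dim (eigenspace M \<mu>)"
  shows "dim (eigenspan M (lam ` {i \<in> {1..CARD('n)}. P (lam i)}))
       = card {i \<in> {1..CARD('n)}. P (lam i)}"
proof -
  define A where "A = {i \<in> {1..CARD('n)}. P (lam i)}"
  have "dim (eigenspan M (lam ` A)) = (\<Sum>\<mu>\<in>lam ` A. card {i \<in> {1..CARD('n)}. lam i = \<mu>})"
    by (simp add: dim_eigenspan[OF symm] A_def mult[symmetric])
  also have "\<dots> = (\<Sum>\<mu>\<in>lam ` A. card {i \<in> A. lam i = \<mu>})"
    by (intro sum.cong refl arg_cong[where f = card]) (auto simp: A_def)
  also have "\<dots> = card A"
    using sum.image_gen[of A "\<lambda>_. 1 :: nat" lam] by (simp add: A_def)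
  finally show ?thesis by (simp add: A_def)
qed

lemma card_sorted_indices:
  fixes lam :: "nat \<Rightarrow> real"
  assumes sorted: "\<And>i j. 1 \<le> i \<Longrightarrow> i \<le> j \<Longrightarrow> j \<le> n \<Longrightarrow> lam i \<le> lam j"
    and k: "1 \<le> k" "k \<le> n"
  shows "n + 1 \<le> card {i \<in> {1..n}. lam k < lam i} + card {i \<in> {1..n}. lam i = lam k} + k"
    and "n + 1 \<le> card {i \<in> {1..n}. lam k \<le> lam i} + k"
proof -
  have "{1..n} \<subseteq> {i \<in> {1..n}. lam k < lam i} \<union> {i \<in> {1..n}. lam i = lam k} \<union> {1..<k}"
  proof
    fix i assume "i \<in> {1..n}"
    then show "i \<in> {i \<in> {1..n}. lam k < lam i} \<union> {i \<in> {1..n}. lam i = lam k} \<union> {1..<k}"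
      using sorted[of k i] k by (cases "k \<le> i") auto
  qed
  then have "card {1..n} \<le> card ({i \<in> {1..n}. lam k < lam i} \<union> {i \<in> {1..n}. lam i = lam k} \<union> {1..<k})"
    by (intro card_mono) auto
  then have "n \<le> card ({i \<in> {1..n}. lam k < lam i} \<union> {i \<in> {1..n}. lam i = lam k} \<union> {1..<k})"
    by simp
  also have "\<dots> \<le> card {i \<in> {1..n}. lam k < lam i} + card {i \<in> {1..n}. lam i = lam k} + card {1..<k}"
    by (meson add_le_mono card_Un_le le_refl order_trans)
  finally show "n + 1 \<le> card {i \<in> {1..n}. lam k < lam i} + card {i \<in> {1..n}. lam i = lam k} + k"
    using k by simp
  have "{k..n} \<subseteq> {i \<in> {1..n}. lam k \<le> lam i}"
    using sorted[of k] k by auto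
  then have "card {k..n} \<le> card {i \<in> {1..n}. lam k \<le> lam i}"
    by (intro card_mono) auto
  then show "n + 1 \<le> card {i \<in> {1..n}. lam k \<le> lam i} + k"
    using k by simp
qed

lemma exists_positive_subspace:
  fixes M :: "real^'n^'n"
  assumes symm: "transpose M = M"
    and sorted: "\<And>i j. 1 \<le> i \<Longrightarrow> i \<le> j \<Longrightarrow> j \<le> CARD('n) \<Longrightarrow> lam i \<le> lam j"
    and mult: "\<And>\<mu>. card {i \<in> {1..CARD('n)}. lam i = \<mu>} = dim (eigenspace M \<mu>)"
    and k: "1 \<le> k" "k \<le> CARD('n)"
  obtains U where "subspace U" "CARD('n) + 1 \<le> dim U + dim (eigenspace M (lam k)) + k"
    "\<And>g. g \<in> U \<Longrightarrow> g \<noteq> 0 \<Longrightarrow> 0 < quad_form M (lam k) g"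
proof
  let ?U = "eigenspan M (lam ` {i \<in> {1..CARD('n)}. lam k < lam i})"
  show "subspace ?U" by (rule subspace_eigenspan)
  show "CARD('n) + 1 \<le> dim ?U + dim (eigenspace M (lam k)) + k"
    using card_sorted_indices(1)[where lam = lam, OF sorted k] mult[of "lam k"]
      dim_eigenspan_indices[OF symm mult, of "\<lambda>\<mu>. lam k < \<mu>"] by linarith
  show "0 < quad_form M (lam k) g" if "g \<in> ?U" "g \<noteq> 0" for g
    using quad_form_pos_eigenspan[OF symm _ _ that] by auto
qed

lemma quad_form_eigenspan_insert:
  fixes M :: "real^'n^'n"
  assumes symm: "transpose M = M" and I: "finite I" "\<forall>\<mu>\<in>I. l < \<mu>"
    and g: "g \<in> eigenspan M (insert l I)"
  shows "0 \<le> quad_form M l g" and "quad_form M l g = 0 \<Longrightarrow> M *v g = l *\<^sub>R g"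
proof -
  obtain x y where xy: "g = x + y" "x \<in> eigenspace M l" "y \<in> eigenspan M I"
    using g eigenspan_insert by blast
  have "l \<notin> I" using I(2) by blast
  then have Q: "quad_form M l g = quad_form M l y"
    using quad_form_add_eigenspan[OF symm _ xy(2,3)] quad_form_eigenspace[OF xy(2)] xy(1) by simp
  have pos: "y \<noteq> 0 \<Longrightarrow> 0 < quad_form M l y"
    by (rule quad_form_pos_eigenspan[OF symm I xy(3)])
  show "0 \<le> quad_form M l g"
    using Q pos by (cases "y = 0") (simp_all add: quad_form_def)
  show "M *v g = l *\<^sub>R g" if "quad_form M l g = 0"
    using Q pos that xy(1,2) by (cases "y = 0") (auto simp: eigenspace_def)
qed

lemma exists_nonnegative_subspace:
  fixes M :: "real^'n^'n"
  assumes symm: "transpose M = M"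
    and sorted: "\<And>i j. 1 \<le> i \<Longrightarrow> i \<le> j \<Longrightarrow> j \<le> CARD('n) \<Longrightarrow> lam i \<le> lam j"
    and mult: "\<And>\<mu>. card {i \<in> {1..CARD('n)}. lam i = \<mu>} = dim (eigenspace M \<mu>)"
    and k: "1 \<le> k" "k \<le> CARD('n)"
  obtains U where "subspace U" "CARD('n) + 1 \<le> dim U + k"
    "\<And>g. g \<in> U \<Longrightarrow> 0 \<le> quad_form M (lam k) g"
    "\<And>g. g \<in> U \<Longrightarrow> quad_form M (lam k) g = 0 \<Longrightarrow> M *v g = lam k *\<^sub>R g"
proof
  define I where "I = lam ` {i \<in> {1..CARD('n)}. lam k < lam i}"
  let ?U = "eigenspan M (lam ` {i \<in> {1..CARD('n)}. lam k \<le> lam i})"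
  have "lam ` {i \<in> {1..CARD('n)}. lam k \<le> lam i} = insert (lam k) I"
  proof
    show "lam ` {i \<in> {1..CARD('n)}. lam k \<le> lam i} \<subseteq> insert (lam k) I"
      unfolding I_def by (force simp: order_le_less)
    show "insert (lam k) I \<subseteq> lam ` {i \<in> {1..CARD('n)}. lam k \<le> lam i}"
      using k unfolding I_def by force
  qed
  then have U: "?U = eigenspan M (insert (lam k) I)" by simp
  have I: "finite I" "\<forall>\<mu>\<in>I. lam k < \<mu>" by (auto simp: I_def)
  show "subspace ?U" by (rule subspace_eigenspan)
  show "CARD('n) + 1 \<le> dim ?U + k"
    using card_sorted_indices(2)[where lam = lam, OF sorted k]
      dim_eigenspan_indices[OF symm mult, of "\<lambda>\<mu>. lam k \<le> \<mu>"] by linarith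
  show "0 \<le> quad_form M (lam k) g" if "g \<in> ?U" for g
    using quad_form_eigenspan_insert(1)[OF symm I] that unfolding U .
  show "M *v g = lam k *\<^sub>R g" if "g \<in> ?U" "quad_form M (lam k) g = 0" for g
    using quad_form_eigenspan_insert(2)[OF symm I] that unfolding U by blast
qed

section \<open>Ratio spaces\<close>

text \<open>If R is an equivalence on the nonzeros of f, \<open>ratio_space f R\<close> is the span of the
  restrictions of f to the R-classes, i.e. the space spanned by f on the nodal domains.\<close>

definition ratio_space :: "real^'n \<Rightarrow> ('n \<times> 'n) set \<Rightarrow> (real^'n) set" where
  "ratio_space f R = {g. (\<forall>x. f $ x = 0 \<longrightarrow> g $ x = 0) \<and>
     (\<forall>x y. (x, y) \<in> R \<longrightarrow> g $ x * f $ y = g $ y * f $ x)}"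

lemma subspace_ratio_space: "subspace (ratio_space f R)"
  unfolding subspace_def ratio_space_def by (auto simp: distrib_right mult.assoc) (metis add.commute)

lemma ratio_space_vanishes: "g \<in> ratio_space f R \<Longrightarrow> f $ x = 0 \<Longrightarrow> g $ x = 0"
  by (simp add: ratio_space_def)

lemma ratio_space_ratio_eq:
  assumes "g \<in> ratio_space f R" "(x, y) \<in> R" "f $ x \<noteq> 0" "f $ y \<noteq> 0"
  shows "g $ x / f $ x = g $ y / f $ y"
  using assms by (simp add: ratio_space_def field_simps)

lemma quad_form_ratio_identity:
  fixes M :: "real^'n^'n"
  assumes symm: "transpose M = M" and eig: "M *v f = l *\<^sub>R f"
    and zero: "\<And>x. f $ x = 0 \<Longrightarrow> g $ x = 0"
  shows "quad_form M l g = - (\<Sum>x\<in>UNIV. \<Sum>y\<in>UNIV.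
            f $ x * M $ x $ y * f $ y * (g $ x / f $ x - g $ y / f $ y)\<^sup>2) / 2"
proof -
  define A where "A x = g $ x / f $ x" for x
  have gA: "g $ x = A x * f $ x" for x
    using zero[of x] by (cases "f $ x = 0") (auto simp: A_def)
  have row: "l * f $ x = (\<Sum>y\<in>UNIV. M $ x $ y * f $ y)" for x
    using arg_cong[OF eig, of "\<lambda>v. v $ x"] by (simp add: matrix_vector_component)
  define S1 where "S1 = (\<Sum>x\<in>UNIV. \<Sum>y\<in>UNIV. f $ x * M $ x $ y * f $ y * (A x * A y))"
  define S2 where "S2 = (\<Sum>x\<in>UNIV. \<Sum>y\<in>UNIV. f $ x * M $ x $ y * f $ y * (A x)\<^sup>2)"
  define S3 where "S3 = (\<Sum>x\<in>UNIV. \<Sum>y\<in>UNIV. f $ x * M $ x $ y * f $ y * (A y)\<^sup>2)"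
  have "g \<bullet> (M *v g) = S1"
    unfolding inner_vec_sum matrix_vector_component S1_def gA
    by (simp add: sum_distrib_left mult_ac)
  moreover have "l * (g \<bullet> g) = S2"
  proof -
    have "l * (g \<bullet> g) = (\<Sum>x\<in>UNIV. (A x)\<^sup>2 * f $ x * (l * f $ x))"
      unfolding inner_vec_sum gA by (simp add: sum_distrib_left power2_eq_square mult_ac)
    also have "\<dots> = S2" unfolding row S2_def by (simp add: sum_distrib_left mult_ac)
    finally show ?thesis .
  qed
  moreover have "S3 = S2"
    unfolding S3_def S2_def using symmetric_entry[OF symm]
    by (subst sum.swap) (simp add: mult_ac)
  moreover have "(\<Sum>x\<in>UNIV. \<Sum>y\<in>UNIV. f $ x * M $ x $ y * f $ y * (A x - A y)\<^sup>2) = S2 + S3 - 2 * S1"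
    unfolding S1_def S2_def S3_def
    by (simp add: power2_diff sum.distrib sum_subtractf sum_distrib_left algebra_simps)
  ultimately show ?thesis unfolding quad_form_def A_def by linarith
qed

lemma ratio_jump_term_pos:
  fixes M :: "real^'n^'n"
  assumes R: "\<And>x y. adj M x y \<Longrightarrow> 0 < f $ x * sgn_edge M x y * f $ y \<Longrightarrow> (x, y) \<in> R"
    and g: "g \<in> ratio_space f R"
    and xy: "f $ x \<noteq> 0" "f $ y \<noteq> 0" "adj M x y" "g $ x / f $ x \<noteq> g $ y / f $ y"
  shows "0 < f $ x * M $ x $ y * f $ y"
proof -
  have "(x, y) \<notin> R" using ratio_space_ratio_eq[OF g _ xy(1,2)] xy(4) by blast
  then have "f $ x * sgn_edge M x y * f $ y \<le> 0" using R[OF xy(3)] by force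
  moreover have "M $ x $ y \<noteq> 0" using xy(3) by (simp add: adj_def)
  moreover have "f $ x * sgn_edge M x y * f $ y = - (f $ x * M $ x $ y * f $ y) / \<bar>M $ x $ y\<bar>"
    by (simp add: sgn_edge_def)
  ultimately have "0 \<le> f $ x * M $ x $ y * f $ y"
    by (simp add: zero_le_divide_iff)
  moreover have "f $ x * M $ x $ y * f $ y \<noteq> 0" using xy(1,2) \<open>M $ x $ y \<noteq> 0\<close> by simp
  ultimately show ?thesis by (metis order_le_neq_trans)
qed

lemma ratio_terms_nonneg:
  fixes M :: "real^'n^'n"
  assumes R: "\<And>x y. adj M x y \<Longrightarrow> 0 < f $ x * sgn_edge M x y * f $ y \<Longrightarrow> (x, y) \<in> R"
    and g: "g \<in> ratio_space f R"
  shows "0 \<le> f $ x * M $ x $ y * f $ y * (g $ x / f $ x - g $ y / f $ y)\<^sup>2"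
proof (cases "f $ x \<noteq> 0 \<and> f $ y \<noteq> 0 \<and> adj M x y \<and> g $ x / f $ x \<noteq> g $ y / f $ y")
  case True
  then have "0 < f $ x * M $ x $ y * f $ y" by (intro ratio_jump_term_pos[where M = M, OF R g]) auto
  then show ?thesis by simp
next
  case False
  then show ?thesis by (auto simp: adj_def)
qed

lemma quad_form_nonpos_ratio_space:
  fixes M :: "real^'n^'n"
  assumes symm: "transpose M = M" and eig: "M *v f = l *\<^sub>R f"
    and R: "\<And>x y. adj M x y \<Longrightarrow> 0 < f $ x * sgn_edge M x y * f $ y \<Longrightarrow> (x, y) \<in> R"
    and g: "g \<in> ratio_space f R"
  shows "quad_form M l g \<le> 0"
  using quad_form_ratio_identity[OF symm eig ratio_space_vanishes[OF g]]
    sum_nonneg[OF sum_nonneg[OF ratio_terms_nonneg[where M = M, OF R g]]] by simp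

lemma ratio_eq_on_edges_if_quad_form_zero:
  fixes M :: "real^'n^'n"
  assumes symm: "transpose M = M" and eig: "M *v f = l *\<^sub>R f"
    and R: "\<And>x y. adj M x y \<Longrightarrow> 0 < f $ x * sgn_edge M x y * f $ y \<Longrightarrow> (x, y) \<in> R"
    and g: "g \<in> ratio_space f R" and Q: "quad_form M l g = 0"
    and xy: "f $ x \<noteq> 0" "f $ y \<noteq> 0" "adj M x y"
  shows "g $ x / f $ x = g $ y / f $ y"
proof (rule ccontr)
  define T where "T x y = f $ x * M $ x $ y * f $ y * (g $ x / f $ x - g $ y / f $ y)\<^sup>2" for x y
  have T: "0 \<le> T u v" for u v unfolding T_def by (rule ratio_terms_nonneg[where M = M, OF R g])
  assume "g $ x / f $ x \<noteq> g $ y / f $ y"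
  then have "0 < T x y" using ratio_jump_term_pos[where M = M, OF R g xy] by (simp add: T_def)
  also have "T x y \<le> (\<Sum>v\<in>UNIV. T x v)" by (rule member_le_sum) (auto intro: T)
  also have "\<dots> \<le> (\<Sum>u\<in>UNIV. \<Sum>v\<in>UNIV. T u v)"
    by (rule member_le_sum[where f = "\<lambda>u. \<Sum>v\<in>UNIV. T u v"]) (auto intro: sum_nonneg T)
  finally show False
    using Q quad_form_ratio_identity[OF symm eig ratio_space_vanishes[OF g]] by (simp add: T_def)
qed

definition vec_restrict :: "real^'n \<Rightarrow> 'n set \<Rightarrow> real^'n" where
  "vec_restrict f X = (\<chi> x. if x \<in> X then f $ x else 0)"

lemma vec_restrict_nonzero_iff: "X \<subseteq> nz_set f \<Longrightarrow> vec_restrict f X $ x \<noteq> 0 \<longleftrightarrow> x \<in> X"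
  by (auto simp: vec_restrict_def nz_set_def)

lemma orthogonal_vec_restrict: "X \<inter> Y = {} \<Longrightarrow> orthogonal (vec_restrict f X) (vec_restrict g Y)"
  unfolding orthogonal_def inner_vec_sum by (intro sum.neutral) (auto simp: vec_restrict_def)

lemma vec_restrict_class_in_ratio_space:
  assumes eq: "equiv (nz_set f) R" and X: "X \<in> nz_set f // R"
  shows "vec_restrict f X \<in> ratio_space f R"
proof -
  have "a \<in> X \<longleftrightarrow> b \<in> X" if ab: "(a, b) \<in> R" for a b
  proof -
    have "(b, a) \<in> R" using ab eq by (auto simp: equiv_def dest: symD)
    then show ?thesis using in_quotient_imp_closed[OF eq X] ab by blast
  qed
  then show ?thesis
    using in_quotient_imp_subset[OF eq X] by (auto simp: ratio_space_def vec_restrict_def nz_set_def)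
qed

lemma card_quotient_le_dim_ratio_space:
  fixes f :: "real^'n"
  assumes eq: "equiv (nz_set f) R"
  shows "card (nz_set f // R) \<le> dim (ratio_space f R)"
proof -
  define Q where "Q = nz_set f // R"
  have nz: "vec_restrict f X $ x \<noteq> 0 \<longleftrightarrow> x \<in> X" if "X \<in> Q" for X x
    using vec_restrict_nonzero_iff[OF in_quotient_imp_subset[OF eq that[unfolded Q_def]]] .
  have inj: "inj_on (vec_restrict f) Q"
  proof (rule inj_onI)
    fix X Y assume "X \<in> Q" "Y \<in> Q" "vec_restrict f X = vec_restrict f Y"
    then show "X = Y" using nz by (metis subsetI subset_antisym)
  qed
  have "pairwise orthogonal (vec_restrict f ` Q)"
  proof (rule pairwiseI)
    fix u v assume "u \<in> vec_restrict f ` Q" "v \<in> vec_restrict f ` Q" "u \<noteq> v"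
    then obtain X Y where "X \<in> Q" "Y \<in> Q" "X \<noteq> Y" "u = vec_restrict f X" "v = vec_restrict f Y"
      by blast
    moreover from this(1-3) have "X \<inter> Y = {}" using quotient_disj[OF eq] unfolding Q_def by blast
    ultimately show "orthogonal u v" by (simp add: orthogonal_vec_restrict)
  qed
  moreover have "0 \<notin> vec_restrict f ` Q"
  proof
    assume "0 \<in> vec_restrict f ` Q"
    then obtain X where X: "X \<in> Q" "vec_restrict f X = 0" by auto
    moreover obtain x where "x \<in> X" using in_quotient_imp_non_empty[OF eq] X(1) Q_def by blast
    ultimately show False using nz[of X x] by simp
  qed
  ultimately have independent: "independent (vec_restrict f ` Q)"
    by (rule pairwise_orthogonal_independent)
  have "vec_restrict f ` Q \<subseteq> ratio_space f R"
    unfolding Q_def by (rule image_subsetI) (rule vec_restrict_class_in_ratio_space[OF eq])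
  then have "card (vec_restrict f ` Q) \<le> dim (ratio_space f R)"
    by (rule independent_card_le_dim[OF _ independent])
  then show ?thesis using card_image[OF inj] Q_def by simp
qed

lemma vec_restrict_ratio_space_in_span:
  assumes eq: "equiv UNIV R" and g: "g \<in> ratio_space f R" and C: "C \<in> UNIV // R"
  shows "vec_restrict g C \<in> span {vec_restrict f C}"
proof (cases "\<exists>x0\<in>C. f $ x0 \<noteq> 0")
  case True
  then obtain x0 where x0: "x0 \<in> C" "f $ x0 \<noteq> 0" by blast
  have "(x0, y) \<in> R" if "y \<in> C" for y
    using in_quotient_imp_in_rel[OF eq C] x0(1) that by simp
  then have "g $ y = (g $ x0 / f $ x0) * f $ y" if "y \<in> C" for y
    using g that x0(2) by (simp add: ratio_space_def field_simps)
  then have "vec_restrict g C = (g $ x0 / f $ x0) *\<^sub>R vec_restrict f C"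
    by (simp add: vec_restrict_def vec_eq_iff)
  then show ?thesis by (simp add: span_base span_scale)
next
  case False
  then have "vec_restrict g C = 0"
    using ratio_space_vanishes[OF g] by (auto simp: vec_restrict_def vec_eq_iff)
  then show ?thesis by (simp add: span_zero)
qed

lemma sum_vec_restrict_quotient:
  fixes g :: "real^'n"
  assumes eq: "equiv UNIV R"
  shows "(\<Sum>C\<in>UNIV // R. vec_restrict g C) = g"
proof (rule vec_eq_iff[THEN iffD2], rule allI)
  fix x
  have x: "R `` {x} \<in> UNIV // R" "x \<in> R `` {x}"
    by (rule quotientI, simp) (rule equiv_class_self[OF eq], simp)
  have mem_class: "x \<in> C \<longleftrightarrow> C = R `` {x}" if "C \<in> UNIV // R" for C
    using quotient_eq_iff[OF eq that x(1) _ x(2)] x(2) by blast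
  have "(\<Sum>C\<in>UNIV // R. vec_restrict g C) $ x = (\<Sum>C\<in>UNIV // R. vec_restrict g C $ x)"
    by (rule sum_component)
  also have "\<dots> = (\<Sum>C\<in>UNIV // R. if C = R `` {x} then g $ x else 0)"
    by (rule sum.cong[OF refl]) (simp add: vec_restrict_def mem_class)
  also have "\<dots> = g $ x"
    using x(1) by (simp add: sum.delta finite_quotient)
  finally show "(\<Sum>C\<in>UNIV // R. vec_restrict g C) $ x = g $ x" .
qed

lemma dim_ratio_space_le_card_quotient:
  fixes f :: "real^'n"
  assumes eq: "equiv UNIV R"
  shows "dim (ratio_space f R) \<le> card (UNIV // R)"
proof -
  have fin: "finite (UNIV // R)" by (rule finite_quotient) simp_all
  have "ratio_space f R \<subseteq> span (vec_restrict f ` (UNIV // R))"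
  proof
    fix g assume g: "g \<in> ratio_space f R"
    have "vec_restrict g C \<in> span (vec_restrict f ` (UNIV // R))" if "C \<in> UNIV // R" for C
      using vec_restrict_ratio_space_in_span[OF eq g that] span_mono[of "{vec_restrict f C}"] that
      by blast
    then have "(\<Sum>C\<in>UNIV // R. vec_restrict g C) \<in> span (vec_restrict f ` (UNIV // R))"
      by (rule span_sum)
    then show "g \<in> span (vec_restrict f ` (UNIV // R))"
      by (simp add: sum_vec_restrict_quotient[OF eq])
  qed
  then have "dim (ratio_space f R) \<le> card (vec_restrict f ` (UNIV // R))"
    using fin by (intro dim_le_card) auto
  also have "\<dots> \<le> card (UNIV // R)" by (rule card_image_le[OF fin])
  finally show ?thesis .
qed

lemma dim_add_le_dim_Int:
  fixes S T :: "'a::euclidean_space set"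
  assumes "subspace S" "subspace T"
  shows "dim S + dim T \<le> DIM('a) + dim (S \<inter> T)"
  using dim_sums_Int[OF assms] dim_subset_UNIV[of "{x + y |x y. x \<in> S \<and> y \<in> T}"] by linarith

lemma exists_nonzero_vanishing_at:
  fixes V :: "(real^'n) set"
  assumes "subspace V" "2 \<le> dim V"
  shows "\<exists>h\<in>V. h \<noteq> 0 \<and> h $ i = 0"
proof -
  define H where "H = {x :: real^'n. axis i 1 \<bullet> x = 0}"
  have "dim H = CARD('n) - 1"
    using dim_hyperplane[of "axis i (1::real)"] by (simp add: H_def)
  moreover have "dim V + dim H \<le> CARD('n) + dim (V \<inter> H)"
    using dim_add_le_dim_Int[OF assms(1) subspace_hyperplane[of "axis i 1"]] by (simp add: H_def)
  moreover have "0 < CARD('n)" by simp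
  ultimately have "dim (V \<inter> H) \<noteq> 0" using assms(2) by linarith
  then obtain h where "h \<in> V" "h \<in> H" "h \<noteq> 0" using dim_eq_0[of "V \<inter> H"] by auto
  then show ?thesis by (auto simp: H_def inner_axis')
qed

section \<open>Walks and nodal domains\<close>

lemma adj_sym:
  fixes M :: "real^'n^'n"
  assumes "transpose M = M"
  shows "adj M x y \<longleftrightarrow> adj M y x"
  using symmetric_entry[OF assms] by (auto simp: adj_def)

lemma sgn_edge_sym:
  fixes M :: "real^'n^'n"
  assumes "transpose M = M"
  shows "sgn_edge M x y = sgn_edge M y x"
  using symmetric_entry[OF assms] by (simp add: sgn_edge_def)

lemma sgn_edge_cases: "adj M x y \<Longrightarrow> sgn_edge M x y = 1 \<or> sgn_edge M x y = -1"
  by (auto simp: adj_def sgn_edge_def abs_if)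

lemma is_walk_iff_successively: "is_walk M ys \<longleftrightarrow> 2 \<le> length ys \<and> successively (adj M) ys"
  by (simp add: is_walk_def successively_conv_nth)

lemma is_walk_rev:
  fixes M :: "real^'n^'n"
  assumes symm: "transpose M = M" and "is_walk M ys"
  shows "is_walk M (rev ys)"
proof -
  have "successively (\<lambda>x y. adj M y x) ys"
    using assms(2) adj_sym[OF symm] by (auto simp: is_walk_iff_successively elim: successively_mono)
  then show ?thesis using assms(2) by (simp add: is_walk_iff_successively)
qed

lemma is_walk_append:
  assumes "is_walk M ys" "is_walk M zs" "last ys = hd zs"
  shows "is_walk M (ys @ tl zs)"
proof -
  obtain z zs' where "zs = z # zs'" "zs' \<noteq> []"
    using assms(2) by (cases zs; cases "tl zs") (auto simp: is_walk_def)
  then show ?thesis using assms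
    by (auto simp: is_walk_iff_successively successively_append_iff successively_Cons)
qed

lemma is_walk_snoc: "is_walk M ys \<Longrightarrow> adj M (last ys) w \<Longrightarrow> is_walk M (ys @ [w])"
  using is_walk_append[of M ys "[last ys, w]"] by (simp add: is_walk_def less_Suc_eq)

lemma equiv_connected:
  fixes M :: "real^'n^'n"
  assumes symm: "transpose M = M"
  shows "equiv UNIV {(x, y). (adj M)\<^sup>*\<^sup>* x y}"
proof (rule equivI)
  have "(adj M)\<^sup>*\<^sup>* y x" if "(adj M)\<^sup>*\<^sup>* x y" for x y
    using that
  proof (induction rule: rtranclp_induct)
    case (step y z)
    then show ?case using adj_sym[OF symm, of y z] converse_rtranclp_into_rtranclp by metis
  qed simp
  then show "sym {(x, y). (adj M)\<^sup>*\<^sup>* x y}" by (auto intro: symI)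
qed (auto simp: refl_on_def trans_def)

lemma walk_rel_equiv:
  assumes len: "\<And>ys. P ys \<Longrightarrow> 2 \<le> length ys"
    and rev: "\<And>ys. P ys \<Longrightarrow> P (rev ys)"
    and append: "\<And>ys zs. P ys \<Longrightarrow> P zs \<Longrightarrow> last ys = hd zs \<Longrightarrow> f $ hd zs \<noteq> 0 \<Longrightarrow> P (ys @ tl zs)"
  shows "equiv (nz_set f) (walk_rel P f)"
proof (rule equivI)
  show "walk_rel P f \<subseteq> nz_set f \<times> nz_set f" by (auto simp: walk_rel_def)
  show "refl_on (nz_set f) (walk_rel P f)" by (auto simp: refl_on_def walk_rel_def)
  show "sym (walk_rel P f)" by (auto simp: sym_def walk_rel_def)
  have directed: "\<exists>ys. P ys \<and> hd ys = x \<and> last ys = y"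
    if xy: "(x, y) \<in> walk_rel P f" "x \<noteq> y" for x y
  proof -
    obtain ys where ys: "P ys" "(hd ys = x \<and> last ys = y) \<or> (hd ys = y \<and> last ys = x)"
      using xy unfolding walk_rel_def by blast
    have "ys \<noteq> []" using len[OF ys(1)] by auto
    then show ?thesis using ys rev[OF ys(1)] by (auto simp: hd_rev last_rev)
  qed
  show "trans (walk_rel P f)"
  proof (rule transI)
    fix x y z assume xy: "(x, y) \<in> walk_rel P f" and yz: "(y, z) \<in> walk_rel P f"
    show "(x, z) \<in> walk_rel P f"
    proof (cases "x = y \<or> y = z")
      case True
      then show ?thesis using xy yz by auto
    next
      case False
      obtain ys where ys: "P ys" "hd ys = x" "last ys = y" using directed[OF xy] False by blast
      obtain zs where zs: "P zs" "hd zs = y" "last zs = z" using directed[OF yz] False by blast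
      have "f $ y \<noteq> 0" using xy by (auto simp: walk_rel_def nz_set_def)
      then have "P (ys @ tl zs)" using append[OF ys(1) zs(1)] ys zs by simp
      moreover have "tl zs \<noteq> []" "ys \<noteq> []" using len[OF ys(1)] len[OF zs(1)] by (cases zs; auto)+
      ultimately show ?thesis using xy yz ys zs by (auto simp: walk_rel_def last_tl)
    qed
  qed
qed

lemma S_walk_iff_successively:
  "S_walk M f ys \<longleftrightarrow> 2 \<le> length ys \<and>
     successively (\<lambda>a b. adj M a b \<and> 0 < f $ a * sgn_edge M a b * f $ b) ys"
  by (auto simp: S_walk_def is_walk_def successively_conv_nth)

lemma equiv_S_walk_rel:
  fixes M :: "real^'n^'n"
  assumes symm: "transpose M = M"
  shows "equiv (nz_set f) (walk_rel (S_walk M f) f)"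
proof (rule walk_rel_equiv)
  show "2 \<le> length ys" if "S_walk M f ys" for ys using that by (simp add: S_walk_iff_successively)
  show "S_walk M f (rev ys)" if "S_walk M f ys" for ys
    using that adj_sym[OF symm] sgn_edge_sym[OF symm]
    by (auto simp: S_walk_iff_successively mult_ac elim: successively_mono)
  show "S_walk M f (ys @ tl zs)"
    if walks: "S_walk M f ys" "S_walk M f zs" and "last ys = hd zs" for ys zs
  proof -
    obtain z zs' where "zs = z # zs'" "zs' \<noteq> []"
      using walks(2) by (cases zs; cases "tl zs") (auto simp: S_walk_iff_successively)
    then show ?thesis using walks \<open>last ys = hd zs\<close>
      by (auto simp: S_walk_iff_successively successively_append_iff successively_Cons)
  qed
qed

lemma positive_edge_S_walk_rel:
  assumes "adj M x y" "0 < f $ x * sgn_edge M x y * f $ y"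
  shows "(x, y) \<in> walk_rel (S_walk M f) f"
proof -
  have "S_walk M f [x, y]" using assms by (simp add: S_walk_iff_successively)
  moreover have "x \<in> nz_set f" "y \<in> nz_set f" using assms(2) by (auto simp: nz_set_def)
  ultimately show ?thesis unfolding walk_rel_def by force
qed

section \<open>Sign products along weak walks\<close>

definition sign_along :: "real^'n^'n \<Rightarrow> 'n list \<Rightarrow> nat \<Rightarrow> nat \<Rightarrow> real" where
  "sign_along M ys i j = (\<Prod>l\<in>{i..<j}. sgn_edge M (ys ! l) (ys ! Suc l))"

lemma sign_along_concat:
  "i \<le> j \<Longrightarrow> j \<le> k \<Longrightarrow> sign_along M ys i j * sign_along M ys j k = sign_along M ys i k"
  by (simp add: sign_along_def prod.atLeastLessThan_concat)

lemma sign_along_nonzero: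
  assumes "is_walk M ys" "j < length ys"
  shows "sign_along M ys i j \<noteq> 0"
proof -
  have "sgn_edge M (ys ! l) (ys ! Suc l) \<noteq> 0" if "l < j" for l
    using sgn_edge_cases[of M "ys ! l" "ys ! Suc l"] assms that by (auto simp: is_walk_def)
  then show ?thesis by (auto simp: sign_along_def)
qed

lemma sign_along_Cons:
  "sign_along M (x # ys) 0 (Suc j) = sgn_edge M x (ys ! 0) * sign_along M ys 0 j"
  unfolding sign_along_def prod.atLeast0_lessThan_Suc_shift by (simp add: comp_def)

lemma pos_mult_chain:
  fixes a b c s t :: real
  assumes "0 < a * s * b" "0 < b * t * c"
  shows "0 < a * (s * t) * c"
proof -
  have "0 < (a * s * b) * (b * t * c)" using assms by simp
  also have "\<dots> = (a * (s * t) * c) * b\<^sup>2" by (simp add: power2_eq_square mult_ac)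
  finally show ?thesis by (simp add: zero_less_mult_iff)
qed

lemma neg_products_imp_pos:
  fixes a b c :: real
  assumes "a * b < 0" "a * c < 0"
  shows "0 < b * c"
proof -
  have "0 < (a * b) * (a * c)" using assms by (simp add: mult_neg_neg)
  also have "\<dots> = (b * c) * a\<^sup>2" by (simp add: power2_eq_square mult_ac)
  finally show ?thesis by (simp add: zero_less_mult_iff)
qed

text \<open>The definition of a weak walk constrains only consecutive nonzeros of f; since sign
  products along a walk multiply, the condition extends to all pairs of nonzeros.\<close>

lemma W_walk_all_pairs:
  assumes W: "W_walk M f ys" and ij: "i < j" "j < length ys" "f $ (ys ! i) \<noteq> 0" "f $ (ys ! j) \<noteq> 0"
  shows "0 < f $ (ys ! i) * sign_along M ys i j * f $ (ys ! j)"
  using ij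
proof (induction j rule: less_induct)
  case (less j)
  define I where "I = {l. i \<le> l \<and> l < j \<and> f $ (ys ! l) \<noteq> 0}"
  define m where "m = Max I"
  have "finite I" "i \<in> I" using less.prems by (auto simp: I_def)
  then have m: "m \<in> I" and above: "\<And>l. l \<in> I \<Longrightarrow> l \<le> m"
    unfolding m_def by (auto intro: Max_in)
  have "\<forall>l. m < l \<and> l < j \<longrightarrow> f $ (ys ! l) = 0"
    using above m by (fastforce simp: I_def)
  then have mj: "0 < f $ (ys ! m) * sign_along M ys m j * f $ (ys ! j)"
    using W m less.prems unfolding W_walk_def sign_along_def I_def by blast
  show ?case
  proof (cases "m = i")
    case True
    then show ?thesis using mj by simp
  next
    case False
    then have "i < m" "m < j" using m by (auto simp: I_def)
    then have "0 < f $ (ys ! i) * sign_along M ys i m * f $ (ys ! m)"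
      using less.IH[of m] less.prems m by (auto simp: I_def)
    moreover have "sign_along M ys i m * sign_along M ys m j = sign_along M ys i j"
      using \<open>i < m\<close> \<open>m < j\<close> by (intro sign_along_concat) simp_all
    ultimately show ?thesis using pos_mult_chain[OF _ mj] by metis
  qed
qed

lemma W_walk_if_all_pairs:
  assumes "is_walk M ys"
    and "\<And>i j. i < j \<Longrightarrow> j < length ys \<Longrightarrow> f $ (ys ! i) \<noteq> 0 \<Longrightarrow> f $ (ys ! j) \<noteq> 0 \<Longrightarrow>
           0 < f $ (ys ! i) * sign_along M ys i j * f $ (ys ! j)"
  shows "W_walk M f ys"
  using assms by (auto simp: W_walk_def sign_along_def)

lemma sign_along_rev:
  fixes M :: "real^'n^'n"
  assumes symm: "transpose M = M" and "i \<le> j" "j < length ys"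
  shows "sign_along M (rev ys) i j = sign_along M ys (length ys - 1 - j) (length ys - 1 - i)"
  unfolding sign_along_def
proof (rule prod.reindex_bij_witness
    [where i = "\<lambda>l. length ys - 2 - l" and j = "\<lambda>l. length ys - 2 - l"])
  fix l assume "l \<in> {i..<j}"
  then have "Suc (Suc l) \<le> length ys" using assms(3) by simp
  then show "sgn_edge M (ys ! (length ys - 2 - l)) (ys ! Suc (length ys - 2 - l))
      = sgn_edge M (rev ys ! l) (rev ys ! Suc l)"
    by (simp add: rev_nth Suc_diff_Suc numeral_2_eq_2 sgn_edge_sym[OF symm])
qed (use assms(2,3) in auto)

lemma W_walk_rev:
  fixes M :: "real^'n^'n"
  assumes symm: "transpose M = M" and W: "W_walk M f ys"
  shows "W_walk M f (rev ys)"
proof (rule W_walk_if_all_pairs)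
  show "is_walk M (rev ys)" using W is_walk_rev[OF symm] by (simp add: W_walk_def)
  fix i j assume ij: "i < j" "j < length (rev ys)" "f $ (rev ys ! i) \<noteq> 0" "f $ (rev ys ! j) \<noteq> 0"
  define n where "n = length ys"
  have "0 < f $ (ys ! (n - 1 - j)) * sign_along M ys (n - 1 - j) (n - 1 - i) * f $ (ys ! (n - 1 - i))"
    using W_walk_all_pairs[OF W, of "n - 1 - j" "n - 1 - i"] ij by (auto simp: n_def rev_nth)
  then show "0 < f $ (rev ys ! i) * sign_along M (rev ys) i j * f $ (rev ys ! j)"
    using ij sign_along_rev[OF symm, of i j ys] by (simp add: n_def rev_nth mult_ac)
qed

lemma sign_along_append_left:
  "j < length xs \<Longrightarrow> sign_along M (xs @ zs) i j = sign_along M xs i j"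
  by (auto simp: sign_along_def nth_append intro!: prod.cong)

lemma sign_along_append_right:
  "sign_along M (xs @ zs) (length xs + a) (length xs + b) = sign_along M zs a b"
proof -
  have "sign_along M (xs @ zs) (a + length xs) (b + length xs) = sign_along M zs a b"
    unfolding sign_along_def prod.shift_bounds_nat_ivl by (simp add: nth_append)
  then show ?thesis by (simp add: add.commute)
qed

lemma append_tl_eq_butlast_append:
  assumes "ys \<noteq> []" "zs \<noteq> []" "last ys = hd zs"
  shows "ys @ tl zs = butlast ys @ zs"
proof -
  have "ys @ tl zs = butlast ys @ [last ys] @ tl zs" using assms(1) by simp
  also have "\<dots> = butlast ys @ zs" using assms(2,3) by simp
  finally show ?thesis .
qed

lemma sign_pairs_join:
  assumes ij: "i < j" "j < length ws" "f $ (ws ! i) \<noteq> 0" "f $ (ws ! j) \<noteq> 0"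
    and m: "m < length ws" "f $ (ws ! m) \<noteq> 0"
    and left: "\<And>i j. i < j \<Longrightarrow> j \<le> m \<Longrightarrow> f $ (ws ! i) \<noteq> 0 \<Longrightarrow> f $ (ws ! j) \<noteq> 0 \<Longrightarrow>
      0 < f $ (ws ! i) * sign_along M ws i j * f $ (ws ! j)"
    and right: "\<And>i j. m \<le> i \<Longrightarrow> i < j \<Longrightarrow> j < length ws \<Longrightarrow> f $ (ws ! i) \<noteq> 0 \<Longrightarrow>
      f $ (ws ! j) \<noteq> 0 \<Longrightarrow> 0 < f $ (ws ! i) * sign_along M ws i j * f $ (ws ! j)"
  shows "0 < f $ (ws ! i) * sign_along M ws i j * f $ (ws ! j)"
proof -
  consider "j \<le> m" | "m \<le> i" | "i < m" "m < j" by linarith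
  then show ?thesis
  proof cases
    case 3
    have "0 < f $ (ws ! i) * sign_along M ws i m * f $ (ws ! m)" using left 3 ij m by simp
    moreover have "0 < f $ (ws ! m) * sign_along M ws m j * f $ (ws ! j)" using right 3 ij m by simp
    moreover have "sign_along M ws i m * sign_along M ws m j = sign_along M ws i j"
      using 3 by (intro sign_along_concat) simp_all
    ultimately show ?thesis using pos_mult_chain by metis
  qed (use left right ij in simp_all)
qed

lemma W_walk_append:
  assumes W: "W_walk M f ys" "W_walk M f zs" and join: "last ys = hd zs" "f $ hd zs \<noteq> 0"
  shows "W_walk M f (ys @ tl zs)"
proof (rule W_walk_if_all_pairs)
  have ne: "ys \<noteq> []" "zs \<noteq> []" using W by (auto simp: W_walk_def is_walk_def)
  show "is_walk M (ys @ tl zs)" using W join(1) is_walk_append by (auto simp: W_walk_def)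
  define ws where "ws = ys @ tl zs"
  define m where "m = length ys - 1"
  have ws: "ws = butlast ys @ zs" "length (butlast ys) = m"
    using append_tl_eq_butlast_append[OF ne join(1)] by (simp_all add: ws_def m_def)
  have m: "m < length ys" using ne(1) by (simp add: m_def)
  have ws_right: "ws ! (m + t) = zs ! t" "sign_along M ws (m + a) (m + b) = sign_along M zs a b"
    for t a b using ws nth_append_length_plus sign_along_append_right by metis+
  fix i j assume "i < j" "j < length (ys @ tl zs)"
    "f $ ((ys @ tl zs) ! i) \<noteq> 0" "f $ ((ys @ tl zs) ! j) \<noteq> 0"
  then show "0 < f $ ((ys @ tl zs) ! i) * sign_along M (ys @ tl zs) i j * f $ ((ys @ tl zs) ! j)"
    unfolding ws_def[symmetric]
  proof (rule sign_pairs_join[where m = m])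
    show "m < length ws" "f $ (ws ! m) \<noteq> 0"
      using ws_right(1)[of 0] ne join(2) ws by (simp_all add: hd_conv_nth)
    show "0 < f $ (ws ! i) * sign_along M ws i j * f $ (ws ! j)"
      if "i < j" "j \<le> m" "f $ (ws ! i) \<noteq> 0" "f $ (ws ! j) \<noteq> 0" for i j
      using W_walk_all_pairs[OF W(1), of i j] that m
      by (simp add: ws_def nth_append sign_along_append_left)
    show "0 < f $ (ws ! i) * sign_along M ws i j * f $ (ws ! j)"
      if "m \<le> i" "i < j" "j < length ws" "f $ (ws ! i) \<noteq> 0" "f $ (ws ! j) \<noteq> 0" for i j
      using W_walk_all_pairs[OF W(2), of "i - m" "j - m"] that ws ws_right(1)[of "i - m"]
        ws_right(1)[of "j - m"] ws_right(2)[of "i - m" "j - m"] by simp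
  qed
qed

lemma equiv_W_walk_rel:
  fixes M :: "real^'n^'n"
  assumes symm: "transpose M = M"
  shows "equiv (nz_set f) (walk_rel (W_walk M f) f)"
proof (rule walk_rel_equiv)
  show "2 \<le> length ys" if "W_walk M f ys" for ys using that by (simp add: W_walk_def is_walk_def)
qed (simp_all add: W_walk_rev[OF symm] W_walk_append)

lemma W_walk_zero_interior:
  assumes "is_walk M (x # zs @ [y])" "\<forall>z\<in>set zs. f $ z = 0"
    and "0 < f $ x * sign_along M (x # zs @ [y]) 0 (Suc (length zs)) * f $ y"
  shows "W_walk M f (x # zs @ [y])"
  unfolding W_walk_def sign_along_def[symmetric]
proof (intro conjI allI impI assms(1))
  fix i j assume ij: "i < j \<and> j < length (x # zs @ [y]) \<and> f $ ((x # zs @ [y]) ! i) \<noteq> 0 \<and>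
    f $ ((x # zs @ [y]) ! j) \<noteq> 0 \<and> (\<forall>l. i < l \<and> l < j \<longrightarrow> f $ ((x # zs @ [y]) ! l) = 0)"
  have inner: "f $ ((x # zs @ [y]) ! l) = 0" if "0 < l" "l < Suc (length zs)" for l
    using assms(2) that by (cases l) (auto simp: nth_append)
  have "i = 0" "j = Suc (length zs)"
    using ij inner[of i] inner[of j] by (fastforce, fastforce)
  then show "0 < f $ ((x # zs @ [y]) ! i) * sign_along M (x # zs @ [y]) i j * f $ ((x # zs @ [y]) ! j)"
    using assms(3) by (simp add: nth_append)
qed

lemma positive_edge_W_walk_rel:
  assumes "adj M x y" "0 < f $ x * sgn_edge M x y * f $ y"
  shows "(x, y) \<in> walk_rel (W_walk M f) f"
proof -
  have "W_walk M f (x # [] @ [y])"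
    using assms by (intro W_walk_zero_interior) (auto simp: is_walk_def sign_along_def less_Suc_eq)
  moreover have "x \<in> nz_set f" "y \<in> nz_set f" using assms(2) by (auto simp: nz_set_def)
  ultimately show ?thesis unfolding walk_rel_def by force
qed

section \<open>Zeros of an eigenfunction\<close>

lemma zero_vertex_row_sum:
  assumes "M *v f = l *\<^sub>R f" "f $ w = 0"
  shows "(\<Sum>y\<in>UNIV. M $ w $ y * f $ y) = 0"
  using arg_cong[OF assms(1), of "\<lambda>v. v $ w"] assms(2) by (simp add: matrix_vector_component)

lemma opposite_neighbour:
  assumes eig: "M *v f = l *\<^sub>R f" and w: "f $ w = 0" and v: "adj M w v" "f $ v \<noteq> 0"
  obtains v' where "adj M w v'" "f $ v' \<noteq> 0" "(M $ w $ v * f $ v) * (M $ w $ v' * f $ v') < 0"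
proof -
  define t where "t y = M $ w $ y * f $ y" for y
  have tv: "t v \<noteq> 0" using v by (auto simp: t_def adj_def)
  have "\<exists>y. t v * t y < 0"
  proof (rule ccontr)
    assume "\<nexists>y. t v * t y < 0"
    then have "t v * t v \<le> (\<Sum>y\<in>UNIV. t v * t y)" by (intro member_le_sum) (auto simp: not_less)
    also have "\<dots> = 0"
      using zero_vertex_row_sum[OF eig w] by (simp add: t_def sum_distrib_left[symmetric])
    finally show False using tv not_real_square_gt_zero[of "t v"] by linarith
  qed
  then obtain v' where "t v * t v' < 0" by blast
  moreover from this have "adj M w v'" "f $ v' \<noteq> 0" using w by (auto simp: t_def adj_def)
  ultimately show ?thesis using that by (simp add: t_def)
qed

lemma sgn_edge_products_sign:
  fixes M :: "real^'n^'n"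
  assumes symm: "transpose M = M" and "adj M w y" "adj M w z"
  shows "0 < (f $ y * sgn_edge M y w) * (f $ z * sgn_edge M z w)
      \<longleftrightarrow> 0 < (M $ w $ y * f $ y) * (M $ w $ z * f $ z)"
    and "(f $ y * sgn_edge M y w) * (f $ z * sgn_edge M z w) < 0
      \<longleftrightarrow> (M $ w $ y * f $ y) * (M $ w $ z * f $ z) < 0"
proof -
  have "(f $ y * sgn_edge M y w) * (f $ z * sgn_edge M z w)
    = (M $ w $ y * f $ y) * (M $ w $ z * f $ z) / (\<bar>M $ w $ y\<bar> * \<bar>M $ w $ z\<bar>)"
    using symmetric_entry[OF symm, of y w] symmetric_entry[OF symm, of z w]
    by (simp add: sgn_edge_def)
  moreover have "0 < \<bar>M $ w $ y\<bar> * \<bar>M $ w $ z\<bar>" using assms(2,3) by (simp add: adj_def)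
  ultimately show "0 < (f $ y * sgn_edge M y w) * (f $ z * sgn_edge M z w)
      \<longleftrightarrow> 0 < (M $ w $ y * f $ y) * (M $ w $ z * f $ z)"
    and "(f $ y * sgn_edge M y w) * (f $ z * sgn_edge M z w) < 0
      \<longleftrightarrow> (M $ w $ y * f $ y) * (M $ w $ z * f $ z) < 0"
    by (simp_all add: zero_less_divide_iff divide_less_0_iff)
qed

lemma same_side_neighbours_W_walk_rel:
  fixes M :: "real^'n^'n"
  assumes symm: "transpose M = M" and w: "f $ w = 0"
    and adj: "adj M w y1" "adj M w y2" and nz: "f $ y1 \<noteq> 0" "f $ y2 \<noteq> 0"
    and same: "0 < (M $ w $ y1 * f $ y1) * (M $ w $ y2 * f $ y2)"
  shows "(y1, y2) \<in> walk_rel (W_walk M f) f"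
proof -
  have "f $ y1 * sign_along M (y1 # [w] @ [y2]) 0 (Suc (length [w])) * f $ y2
      = (f $ y1 * sgn_edge M y1 w) * (f $ y2 * sgn_edge M y2 w)"
    by (simp add: sign_along_def numeral_2_eq_2 sgn_edge_sym[OF symm, of w y2] mult_ac)
  also have "\<dots> > 0" using sgn_edge_products_sign(1)[OF symm adj] same by simp
  finally have "W_walk M f (y1 # [w] @ [y2])"
    using adj adj_sym[OF symm] w
    by (intro W_walk_zero_interior) (auto simp: is_walk_def less_Suc_eq numeral_2_eq_2)
  then show ?thesis using nz unfolding walk_rel_def nz_set_def by force
qed

text \<open>At a zero w of f the eigenvalue equations of f and g at w read \<open>\<Sum>y. t y = 0\<close> and
  \<open>\<Sum>y. (g y / f y) t y = 0\<close> with \<open>t y = M w y f y\<close>. Neighbours on the same side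
  (t of equal sign) are joined by a weak walk through w, so the ratio takes one value a on
  \<open>t > 0\<close> and one value b on \<open>t < 0\<close>, and the two equations force a = b.\<close>

lemma ratio_eq_opposite_neighbours:
  fixes M :: "real^'n^'n"
  assumes symm: "transpose M = M" and eig: "M *v f = l *\<^sub>R f"
    and g: "g \<in> ratio_space f (walk_rel (W_walk M f) f)" and geig: "M *v g = l *\<^sub>R g"
    and w: "f $ w = 0" and opposite: "(M $ w $ p * f $ p) * (M $ w $ q * f $ q) < 0"
  shows "g $ p / f $ p = g $ q / f $ q"
proof -
  define t where "t y = M $ w $ y * f $ y" for y
  define A where "A y = g $ y / f $ y" for y
  have gA: "g $ y = A y * f $ y" for y
    using ratio_space_vanishes[OF g, of y] by (cases "f $ y = 0") (auto simp: A_def)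
  have same: "A y = A z" if "0 < t y * t z" for y z
  proof -
    have "t y \<noteq> 0" "t z \<noteq> 0" using that by auto
    then have "adj M w y" "adj M w z" "f $ y \<noteq> 0" "f $ z \<noteq> 0" using w by (auto simp: t_def adj_def)
    then show ?thesis
      using same_side_neighbours_W_walk_rel[OF symm w] ratio_space_ratio_eq[OF g] that
      by (simp add: A_def t_def)
  qed
  have sums: "(\<Sum>y\<in>UNIV. t y) = 0" "(\<Sum>y\<in>UNIV. A y * t y) = 0"
    using zero_vertex_row_sum[OF eig w] zero_vertex_row_sum[OF geig ratio_space_vanishes[OF g w]]
    by (simp_all add: gA t_def mult_ac)
  have "A a = A b" if a: "0 < t a" and b: "t b < 0" for a b
  proof -
    have split: "(A y - A b) * t y = (A a - A b) * max (t y) 0" for y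
      using same[of y a] same[of y b] a b
      by (cases "t y" "0 :: real" rule: linorder_cases) (simp_all add: mult_neg_neg)
    have "(\<Sum>y\<in>UNIV. (A y - A b) * t y) = 0"
      using sums by (simp add: left_diff_distrib sum_subtractf sum_distrib_left[symmetric])
    then have "(A a - A b) * (\<Sum>y\<in>UNIV. max (t y) 0) = 0"
      unfolding split by (simp add: sum_distrib_left)
    moreover have "t a \<le> (\<Sum>y\<in>UNIV. max (t y) 0)"
      using member_le_sum[of a UNIV "\<lambda>y. max (t y) 0"] by simp
    ultimately show ?thesis using a by simp
  qed
  moreover have "0 < t p \<and> t q < 0 \<or> t p < 0 \<and> 0 < t q"
    using opposite by (simp add: t_def mult_less_0_iff)
  ultimately show ?thesis by (auto simp: A_def)
qed

text \<open>A walk through zeros of f from u to w is a weak walk unless its sign is wrong; in that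
  case, replacing u by a neighbour u' of the first zero on the other side fixes the sign,
  and u' carries the same ratio as u.\<close>

lemma ratio_eq_across_zero_run:
  fixes M :: "real^'n^'n"
  assumes symm: "transpose M = M" and eig: "M *v f = l *\<^sub>R f"
    and g: "g \<in> ratio_space f (walk_rel (W_walk M f) f)" and geig: "M *v g = l *\<^sub>R g"
    and walk: "is_walk M (u # zs @ [w])" and "zs \<noteq> []" and zero: "\<forall>z\<in>set zs. f $ z = 0"
    and nz: "f $ u \<noteq> 0" "f $ w \<noteq> 0"
  shows "g $ u / f $ u = g $ w / f $ w"
proof -
  obtain z zs' where zs: "zs = z # zs'" using \<open>zs \<noteq> []\<close> by (cases zs) auto
  have z: "f $ z = 0" "adj M z u" using zero walk adj_sym[OF symm]
    by (auto simp: zs is_walk_iff_successively)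
  have tail: "successively (adj M) (z # zs' @ [w])"
    using walk by (simp add: zs is_walk_iff_successively)
  define S where "S = sign_along M (z # zs' @ [w]) 0 (length zs)"
  have sign: "sign_along M (v # zs @ [w]) 0 (Suc (length zs)) = sgn_edge M v z * S" for v
    using sign_along_Cons[of M v "z # zs' @ [w]"] by (simp add: zs S_def)
  have related: "g $ v / f $ v = g $ w / f $ w"
    if "f $ v \<noteq> 0" "adj M v z" "0 < f $ v * (sgn_edge M v z * S) * f $ w" for v
  proof -
    have "W_walk M f (v # zs @ [w])"
      using that tail zero sign[of v]
      by (intro W_walk_zero_interior) (simp_all add: zs is_walk_iff_successively)
    then have "(v, w) \<in> walk_rel (W_walk M f) f"
      using that(1) nz(2) unfolding walk_rel_def nz_set_def by force
    then show ?thesis by (rule ratio_space_ratio_eq[OF g _ that(1) nz(2)])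
  qed
  show ?thesis
  proof (cases "0 < f $ u * (sgn_edge M u z * S) * f $ w")
    case True
    then show ?thesis using related nz(1) z(2) adj_sym[OF symm] by blast
  next
    case False
    have "sign_along M (u # zs @ [w]) 0 (Suc (length zs)) \<noteq> 0"
      using sign_along_nonzero[OF walk] by simp
    then have neg: "f $ u * (sgn_edge M u z * S) * f $ w < 0"
      using False nz sign[of u] by (simp add: not_less order_le_less)
    obtain u' where u': "adj M z u'" "f $ u' \<noteq> 0" "(M $ z $ u * f $ u) * (M $ z $ u' * f $ u') < 0"
      using opposite_neighbour[OF eig z(1) z(2) nz(1)] by blast
    have opposite: "(f $ u * sgn_edge M u z) * (f $ u' * sgn_edge M u' z) < 0"
      using sgn_edge_products_sign(2)[OF symm z(2) u'(1)] u'(3) by simp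
    have "(f $ u * sgn_edge M u z) * (S * f $ w) < 0" using neg by (simp add: mult_ac)
    from neg_products_imp_pos[OF opposite this]
    have "0 < f $ u' * (sgn_edge M u' z * S) * f $ w" by (simp add: mult_ac)
    then have "g $ u' / f $ u' = g $ w / f $ w"
      using related u'(2) u'(1) adj_sym[OF symm] by blast
    moreover have "g $ u / f $ u = g $ u' / f $ u'"
      by (rule ratio_eq_opposite_neighbours[OF symm eig g geig z(1) u'(3)])
    ultimately show ?thesis by simp
  qed
qed

lemma ratio_const_on_paths:
  fixes M :: "real^'n^'n"
  assumes symm: "transpose M = M" and eig: "M *v f = l *\<^sub>R f"
    and g: "g \<in> ratio_space f (walk_rel (W_walk M f) f)" and geig: "M *v g = l *\<^sub>R g"
    and edges: "\<And>x y. f $ x \<noteq> 0 \<Longrightarrow> f $ y \<noteq> 0 \<Longrightarrow> adj M x y \<Longrightarrow> g $ x / f $ x = g $ y / f $ y"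
    and path: "(adj M)\<^sup>*\<^sup>* x v" and nz: "f $ x \<noteq> 0" "f $ v \<noteq> 0"
  shows "g $ x / f $ x = g $ v / f $ v"
proof -
  define A where "A y = g $ y / f $ y" for y
  define reached where "reached v \<longleftrightarrow> (if f $ v \<noteq> 0 then A v = A x
      else \<exists>u zs. f $ u \<noteq> 0 \<and> A u = A x \<and> is_walk M (u # zs @ [v]) \<and> (\<forall>z\<in>set zs. f $ z = 0))"
    for v
  have "reached v" using path
  proof (induction rule: rtranclp_induct)
    case base
    then show ?case using nz(1) by (simp add: reached_def)
  next
    case (step v w)
    show ?case
    proof (cases "f $ v = 0")
      case False
      then show ?thesis
        using step edges[OF False _ step(2)]
        by (auto simp: reached_def A_def is_walk_def less_Suc_eq intro!: exI[of _ v] exI[of _ "[]"])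
    next
      case True
      then obtain u zs where u: "f $ u \<noteq> 0" "A u = A x" "is_walk M (u # zs @ [v])"
        "\<forall>z\<in>set zs. f $ z = 0"
        using step.IH by (auto simp: reached_def)
      have walk: "is_walk M (u # (zs @ [v]) @ [w])"
        using is_walk_snoc[OF u(3)] step(2) by simp
      show ?thesis
      proof (cases "f $ w = 0")
        case True
        then show ?thesis
          using u walk \<open>f $ v = 0\<close>
          by (auto simp: reached_def intro!: exI[of _ u] exI[of _ "zs @ [v]"])
      next
        case False
        then show ?thesis
          using ratio_eq_across_zero_run[OF symm eig g geig walk _ _ u(1) False] u \<open>f $ v = 0\<close>
          by (simp add: reached_def A_def)
      qed
    qed
  qed
  then show ?thesis using nz by (simp add: reached_def A_def)
qed

section \<open>Bounds on the nodal counts\<close>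

lemma strong_nodal_count_bound:
  fixes M :: "real^'n^'n"
  assumes symm: "transpose M = M" and eig: "M *v f = l *\<^sub>R f"
    and U: "subspace U" "\<And>g. g \<in> U \<Longrightarrow> g \<noteq> 0 \<Longrightarrow> 0 < quad_form M l g"
  shows "strong_nodal_count M f + dim U \<le> CARD('n)"
proof -
  define S where "S = ratio_space f (walk_rel (S_walk M f) f)"
  have "strong_nodal_count M f \<le> dim S"
    unfolding strong_nodal_count_def S_def
    by (rule card_quotient_le_dim_ratio_space[OF equiv_S_walk_rel[OF symm]])
  moreover have "dim S + dim U \<le> CARD('n) + dim (S \<inter> U)"
    using dim_add_le_dim_Int[OF subspace_ratio_space U(1), of f "walk_rel (S_walk M f) f"]
    by (simp add: S_def)
  moreover have "S \<inter> U \<subseteq> {0}"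
    using quad_form_nonpos_ratio_space[OF symm eig positive_edge_S_walk_rel] U(2)
    by (force simp: S_def)
  then have "dim (S \<inter> U) = 0" by (simp only: dim_eq_0)
  ultimately show ?thesis by linarith
qed

lemma weak_nodal_count_bound:
  fixes M :: "real^'n^'n"
  assumes symm: "transpose M = M" and eig: "M *v f = l *\<^sub>R f"
    and U: "subspace U" "\<And>g. g \<in> U \<Longrightarrow> 0 \<le> quad_form M l g"
      "\<And>g. g \<in> U \<Longrightarrow> quad_form M l g = 0 \<Longrightarrow> M *v g = l *\<^sub>R g"
  shows "weak_nodal_count M f + dim U \<le> CARD('n) + num_components M"
proof -
  define R where "R = walk_rel (W_walk M f) f"
  define W where "W = ratio_space f R"
  define C where "C = {(x, y). (adj M)\<^sup>*\<^sup>* x y}"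
  have "weak_nodal_count M f \<le> dim W"
    unfolding weak_nodal_count_def W_def R_def
    by (rule card_quotient_le_dim_ratio_space[OF equiv_W_walk_rel[OF symm]])
  moreover have "W \<inter> U \<subseteq> ratio_space f C"
  proof
    fix g assume g: "g \<in> W \<inter> U"
    have R: "\<And>x y. adj M x y \<Longrightarrow> 0 < f $ x * sgn_edge M x y * f $ y \<Longrightarrow> (x, y) \<in> R"
      unfolding R_def by (rule positive_edge_W_walk_rel)
    have Q: "quad_form M l g = 0"
      using quad_form_nonpos_ratio_space[OF symm eig R, of g] U(2)[of g] g by (simp add: W_def)
    have "g $ x / f $ x = g $ y / f $ y"
      if "f $ x \<noteq> 0" "f $ y \<noteq> 0" "(adj M)\<^sup>*\<^sup>* x y" for x y
      using ratio_const_on_paths[OF symm eig _ U(3)[OF _ Q]] that g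
        ratio_eq_on_edges_if_quad_form_zero[OF symm eig R _ Q]
      by (simp add: W_def R_def)
    moreover have vanish: "g $ x = 0" if "f $ x = 0" for x
      using ratio_space_vanishes[of g f R] g that by (simp add: W_def)
    ultimately have "g $ x * f $ y = g $ y * f $ x" if "(adj M)\<^sup>*\<^sup>* x y" for x y
      using that by (cases "f $ x = 0 \<or> f $ y = 0") (auto simp: field_simps)
    then show "g \<in> ratio_space f C" using vanish by (auto simp: ratio_space_def C_def)
  qed
  then have "dim (W \<inter> U) \<le> dim (ratio_space f C)" by (rule dim_subset)
  moreover have "dim (ratio_space f C) \<le> num_components M"
    unfolding num_components_def C_def
    by (rule dim_ratio_space_le_card_quotient[OF equiv_connected[OF symm]])
  moreover have "dim W + dim U \<le> CARD('n) + dim (W \<inter> U)"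
    using dim_add_le_dim_Int[OF subspace_ratio_space U(1), of f R] by (simp add: W_def)
  ultimately show ?thesis by linarith
qed

lemma strong_nodal_count_bound_minimal_support:
  fixes M :: "real^'n^'n"
  assumes symm: "transpose M = M" and eig: "M *v f = l *\<^sub>R f" and "f \<noteq> 0"
    and minimal: "minimal_support M l f"
    and U: "subspace U" "\<And>g. g \<in> U \<Longrightarrow> 0 \<le> quad_form M l g"
      "\<And>g. g \<in> U \<Longrightarrow> quad_form M l g = 0 \<Longrightarrow> M *v g = l *\<^sub>R g"
  shows "strong_nodal_count M f + dim U \<le> CARD('n) + 1"
proof (rule ccontr)
  define S where "S = ratio_space f (walk_rel (S_walk M f) f)"
  assume "\<not> ?thesis"
  moreover have "strong_nodal_count M f \<le> dim S"
    unfolding strong_nodal_count_def S_def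
    by (rule card_quotient_le_dim_ratio_space[OF equiv_S_walk_rel[OF symm]])
  moreover have "dim S + dim U \<le> CARD('n) + dim (S \<inter> U)"
    using dim_add_le_dim_Int[OF subspace_ratio_space U(1), of f "walk_rel (S_walk M f) f"]
    by (simp add: S_def)
  ultimately have "2 \<le> dim (S \<inter> U)" by linarith
  obtain x where x: "f $ x \<noteq> 0" using \<open>f \<noteq> 0\<close> by (metis vec_eq_iff zero_index)
  obtain h where h: "h \<in> S" "h \<in> U" "h \<noteq> 0" "h $ x = 0"
    using exists_nonzero_vanishing_at[OF _ \<open>2 \<le> dim (S \<inter> U)\<close>]
      subspace_inter[OF subspace_ratio_space U(1)] unfolding S_def by blast
  have "quad_form M l h = 0"
    using quad_form_nonpos_ratio_space[OF symm eig positive_edge_S_walk_rel h(1)[unfolded S_def]]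
      U(2)[OF h(2)] by simp
  then have "M *v h = l *\<^sub>R h" using U(3) h(2) by blast
  moreover have "supp h \<subseteq> supp f"
    using ratio_space_vanishes[of h f] h(1) by (auto simp: S_def supp_def)
  ultimately have "supp h = supp f" using minimal h(3) by (simp add: minimal_support_def)
  then show False using x h(4) by (auto simp: supp_def)
qed

theorem theorem4p1:
  fixes M :: "real^'n^'n" and lam :: "nat \<Rightarrow> real" and k :: nat and f :: "real^'n"
  assumes symm: "transpose M = M"
    and sorted: "\<And>i j. 1 \<le> i \<Longrightarrow> i \<le> j \<Longrightarrow> j \<le> CARD('n) \<Longrightarrow> lam i \<le> lam j"
    and mult: "\<And>\<mu>. card {i \<in> {1..CARD('n)}. lam i = \<mu>} = dim (eigenspace M \<mu>)"
    and k: "1 \<le> k" "k \<le> CARD('n)"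
    and f_nz: "f \<noteq> 0"
    and f_eig: "M *v f = lam k *\<^sub>R f"
  shows "strong_nodal_count M f \<le> k + dim (eigenspace M (lam k)) - 1
       \<and> weak_nodal_count M f \<le> k + num_components M - 1
       \<and> (num_components M = 1 \<longrightarrow> weak_nodal_count M f \<le> k)
       \<and> (minimal_support M (lam k) f \<longrightarrow> strong_nodal_count M f \<le> k)"
proof -
  obtain Upos where Upos: "subspace Upos" "CARD('n) + 1 \<le> dim Upos + dim (eigenspace M (lam k)) + k"
    "\<And>g. g \<in> Upos \<Longrightarrow> g \<noteq> 0 \<Longrightarrow> 0 < quad_form M (lam k) g"
    using exists_positive_subspace[OF symm sorted mult k] by blast
  obtain Unn where Unn: "subspace Unn" "CARD('n) + 1 \<le> dim Unn + k"
    "\<And>g. g \<in> Unn \<Longrightarrow> 0 \<le> quad_form M (lam k) g"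
    "\<And>g. g \<in> Unn \<Longrightarrow> quad_form M (lam k) g = 0 \<Longrightarrow> M *v g = lam k *\<^sub>R g"
    using exists_nonnegative_subspace[OF symm sorted mult k] by blast
  have "strong_nodal_count M f \<le> k + dim (eigenspace M (lam k)) - 1"
    using strong_nodal_count_bound[OF symm f_eig Upos(1,3)] Upos(2) by linarith
  moreover have "weak_nodal_count M f \<le> k + num_components M - 1"
    using weak_nodal_count_bound[OF symm f_eig Unn(1,3,4)] Unn(2) by linarith
  moreover have "strong_nodal_count M f \<le> k" if "minimal_support M (lam k) f"
    using strong_nodal_count_bound_minimal_support[OF symm f_eig f_nz that Unn(1,3,4)] Unn(2)
    by linarith
  ultimately show ?thesis by auto
qed

end
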